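(* There exists a haltingly correct CRN protocol $\Pi=(\mathcal{S},\mathcal{R})$ such that $\operatorname{RT}_{\mathrm{halt}}^{\Pi}(n)=O(n)$, but if the minimum in the definition of $\operatorname{RT}_{\mathrm{halt}}^{\Pi}(n)$ is restricted to runtime policies $\varrho$ with $\varrho(\mathbf{c})\supseteq\mathcal{E}(\mathbf{c})$ for every configuration $\mathbf{c}$, then the resulting quantity is $\Omega(n\log n)$.
   Context: $\mathcal{E}(\mathbf{c})$ denotes the set of reactions that escape from the strongly connected component of $\mathbf{c}$ in the configuration digraph $D^{\Pi}$ (which has an $\alpha$-labeled edge $\mathbf{c}\to\alpha(\mathbf{c})$ for each configuration $\mathbf{c}$ and each $\alpha\in\operatorname{app}(\mathbf{c})$); a reaction $\alpha$ escapes from a component $S$ if $\alpha\in\operatorname{app}(\mathbf{c})$ and $\alpha(\mathbf{c})\notin S$ for all $\mathbf{c}\in S$. CRN model: $\Pi=(\mathcal{S},\mathcal{R})$, finite species set, finite reaction set $\mathcal{R}\subset\mathbb{N}^{\mathcal{S}}\times\mathbb{N}^{\mathcal{S}}$; reactions $(\mathbf{r},\mathbf{p})$ with $\|\mathbf{r}\|_1\in\{1,2\}$, $\|\mathbf{r}\|_1\le\|\mathbf{p}\|_1$; every $\mathbf{r}$ with $1\le\|\mathbf{r}\|_1\le2$ has a nonempty set $\mathcal{R}(\mathbf{r})$ of reactions; void reactions ($\mathbf{r}=\mathbf{p}$) alone in their $\mathcal{R}(\mathbf{r})$; $\operatorname{NV}(\mathcal{R})$ non-void; finite density. Configurations $\mathbf{c}\in\mathbb{N}^{\mathcal{S}}$,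 $\|\mathbf{c}\|_1\ge1$; applicability $\mathbf{r}\le\mathbf{c}$, result $\alpha(\mathbf{c})=\mathbf{c}-\mathbf{r}+\mathbf{p}$; $\operatorname{app}(\mathbf{c})$; reachability $\stackrel{*}{\rightharpoonup}$; $\mathrm{halt}(Z)=\{\mathbf{c}\in Z:\mathbf{c}\stackrel{*}{\rightharpoonup}\mathbf{c}'\Rightarrow\mathbf{c}'=\mathbf{c}\}$. Weakly fair executions $\langle\mathbf{c}^t,\alpha^t\rangle$: every reaction applicable at step $t$ is later scheduled or becomes inapplicable. Correctness is w.r.t. an interface $\mathcal{I}=(\mathcal{U},\mu,\mathcal{C})$ giving target sets $Z_{\mathcal{I}}(\mathbf{c}^0)=\{\mathbf{c}:(\mu(\mathbf{c}^0),\mu(\mathbf{c}))\in\mathcal{C}\}$ and valid initial configurations (those with $Z_{\mathcal{I}}(\mathbf{c}^0)\ne\emptyset$); haltingly correct: every weakly fair valid execution reaches $\mathrm{halt}(Z_{\mathcal{I}}(\mathbf{c}^0))$, first such step = halting step. Runtime: stochastic scheduler with volume $\varphi=\Theta(n)$, $n=\|\mathbf{c}^0\|_1$; propensity $\pi_{\mathbf{c}}(\alpha)=\mathbf{c}(A)/|\mathcal{R}(\mathbf{r})|$ ($\mathbf{r}=A$), $\frac1\varphi\binom{\mathbf{c}(A)}2/|\mathcal{R}(\mathbf{r})|$ ($\mathbf{r}=2A$), $\frac1\varphi\mathbf{c}(A)\mathbf{c}(B)/|\mathcal{R}(\mathbf{r})|$ ($\mathbf{r}=A+B$); step time span $1/\pi_{\mathbf{c}}(\mathcal{R})$.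 $\tau(\eta,t,Q)$ = least $s>t$ with $\alpha^{s-1}\in Q$ or every reaction of $Q$ inapplicable at some step in $[t,s]$. Runtime policy $\varrho(\mathbf{c})\subseteq\operatorname{NV}(\mathcal{R})$; skipping policy $\sigma(t)\ge t$; rounds $t(0)=0$, $t_e(i)=\sigma(t(i))$, $\mathbf{e}^i=\mathbf{c}^{t_e(i)}$, $t(i+1)=\tau(\eta,t_e(i),\varrho(\mathbf{e}^i))$; $\operatorname{TC}^{\varrho}(\mathbf{c})$ = expected total time span of the steps before $\tau(\eta_r,0,\varrho(\mathbf{c}))$ of a stochastic execution from $\mathbf{c}$; $\operatorname{RT}_{\mathrm{halt}}^{\varrho,\sigma}(\eta)=\sum_{i<i^*}\operatorname{TC}^{\varrho}(\mathbf{e}^i)$, $i^*=\min\{i:t(i)\ge t^*\}$; $\operatorname{RT}_{\mathrm{halt}}^{\Pi}(n)=\min_\varrho\max_{\eta,\sigma}\operatorname{RT}_{\mathrm{halt}}^{\varrho,\sigma}(\eta)$, max over weakly fair valid executions with initial molecular count $n$ and all skipping policies. *)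

theory Defs
  imports Complex_Main "HOL-Library.Extended_Nonnegative_Real" "HOL-Library.Landau_Symbols"
begin

type_synonym conf = "nat \<Rightarrow> nat"
type_synonym rxn = "conf \<times> conf"

definition supp_in :: "nat set \<Rightarrow> conf \<Rightarrow> bool" where
  "supp_in S c \<longleftrightarrow> (\<forall>A. A \<notin> S \<longrightarrow> c A = 0)"

definition norm1 :: "nat set \<Rightarrow> conf \<Rightarrow> nat" where
  "norm1 S c = (\<Sum>A\<in>S. c A)"

definition is_config :: "nat set \<Rightarrow> conf \<Rightarrow> bool" where
  "is_config S c \<longleftrightarrow> supp_in S c \<and> norm1 S c \<ge> 1"

definition Rof :: "rxn set \<Rightarrow> conf \<Rightarrow> rxn set" where
  "Rof R r = {\<alpha>\<in>R. fst \<alpha> = r}"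

definition NV :: "rxn set \<Rightarrow> rxn set" where
  "NV R = {\<alpha>\<in>R. fst \<alpha> \<noteq> snd \<alpha>}"

definition crn :: "nat set \<Rightarrow> rxn set \<Rightarrow> bool" where
  "crn S R \<longleftrightarrow> finite S \<and> finite R
    \<and> (\<forall>(r,p)\<in>R. supp_in S r \<and> supp_in S p \<and> norm1 S r \<in> {1,2} \<and> norm1 S r \<le> norm1 S p)
    \<and> (\<forall>r. supp_in S r \<and> 1 \<le> norm1 S r \<and> norm1 S r \<le> 2 \<longrightarrow> Rof R r \<noteq> {})
    \<and> (\<forall>r. (r,r) \<in> R \<longrightarrow> Rof R r = {(r,r)})"

definition app :: "rxn set \<Rightarrow> conf \<Rightarrow> rxn set" where
  "app R c = {\<alpha>\<in>R. fst \<alpha> \<le> c}"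

definition apply_rxn :: "rxn \<Rightarrow> conf \<Rightarrow> conf" where
  "apply_rxn \<alpha> c = (\<lambda>A. c A - fst \<alpha> A + snd \<alpha> A)"

definition step :: "nat set \<Rightarrow> rxn set \<Rightarrow> conf \<Rightarrow> conf \<Rightarrow> bool" where
  "step S R c c' \<longleftrightarrow> is_config S c \<and> (\<exists>\<alpha>\<in>app R c. c' = apply_rxn \<alpha> c)"

definition reach :: "nat set \<Rightarrow> rxn set \<Rightarrow> conf \<Rightarrow> conf \<Rightarrow> bool" where
  "reach S R = (step S R)\<^sup>*\<^sup>*"

definition halt :: "nat set \<Rightarrow> rxn set \<Rightarrow> conf set \<Rightarrow> conf set" where
  "halt S R Z = {c\<in>Z. \<forall>c'. reach S R c c' \<longrightarrow> c' = c}"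

definition interface :: "nat set \<Rightarrow> conf set \<Rightarrow> (conf \<Rightarrow> conf) \<Rightarrow> (conf \<times> conf) set \<Rightarrow> bool" where
  "interface S U \<mu> C \<longleftrightarrow> (\<forall>c. is_config S c \<longrightarrow> \<mu> c \<in> U) \<and> C \<subseteq> U \<times> U"

definition target :: "nat set \<Rightarrow> (conf \<Rightarrow> conf) \<Rightarrow> (conf \<times> conf) set \<Rightarrow> conf \<Rightarrow> conf set" where
  "target S \<mu> C c0 = {c. is_config S c \<and> (\<mu> c0, \<mu> c) \<in> C}"

definition valid :: "nat set \<Rightarrow> (conf \<Rightarrow> conf) \<Rightarrow> (conf \<times> conf) set \<Rightarrow> conf \<Rightarrow> bool" where
  "valid S \<mu> C c0 \<longleftrightarrow> is_config S c0 \<and> target S \<mu> C c0 \<noteq> {}"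

definition execution :: "nat set \<Rightarrow> rxn set \<Rightarrow> (nat \<Rightarrow> conf) \<Rightarrow> (nat \<Rightarrow> rxn) \<Rightarrow> bool" where
  "execution S R cs as \<longleftrightarrow> is_config S (cs 0)
     \<and> (\<forall>t. as t \<in> app R (cs t) \<and> cs (Suc t) = apply_rxn (as t) (cs t))"

definition weakly_fair :: "rxn set \<Rightarrow> (nat \<Rightarrow> conf) \<Rightarrow> (nat \<Rightarrow> rxn) \<Rightarrow> bool" where
  "weakly_fair R cs as \<longleftrightarrow>
     (\<forall>t. \<forall>\<alpha>\<in>app R (cs t). \<exists>s\<ge>t. as s = \<alpha> \<or> \<alpha> \<notin> app R (cs s))"

definition halting_correct :: "nat set \<Rightarrow> rxn set \<Rightarrow> (conf \<Rightarrow> conf) \<Rightarrow> (conf \<times> conf) set \<Rightarrow> bool" where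
  "halting_correct S R \<mu> C \<longleftrightarrow>
     (\<forall>cs as. execution S R cs as \<and> weakly_fair R cs as \<and> valid S \<mu> C (cs 0)
        \<longrightarrow> (\<exists>t. cs t \<in> halt S R (target S \<mu> C (cs 0))))"

definition halting_step :: "nat set \<Rightarrow> rxn set \<Rightarrow> (conf \<Rightarrow> conf) \<Rightarrow> (conf \<times> conf) set \<Rightarrow> (nat \<Rightarrow> conf) \<Rightarrow> nat" where
  "halting_step S R \<mu> C cs = (LEAST t. cs t \<in> halt S R (target S \<mu> C (cs 0)))"

definition finite_density :: "nat set \<Rightarrow> rxn set \<Rightarrow> (conf \<Rightarrow> conf) \<Rightarrow> (conf \<times> conf) set \<Rightarrow> bool" where
  "finite_density S R \<mu> C \<longleftrightarrow>
     (\<exists>\<delta>::real. \<forall>c0 c. valid S \<mu> C c0 \<and> reach S R c0 c \<longrightarrow> real (norm1 S c) \<le> \<delta> * real (norm1 S c0))"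

definition scc :: "nat set \<Rightarrow> rxn set \<Rightarrow> conf \<Rightarrow> conf set" where
  "scc S R c = {d. reach S R c d \<and> reach S R d c}"

definition escape :: "nat set \<Rightarrow> rxn set \<Rightarrow> conf \<Rightarrow> rxn set" where
  "escape S R c = {\<alpha>\<in>R. \<forall>d\<in>scc S R c. \<alpha> \<in> app R d \<and> apply_rxn \<alpha> d \<notin> scc S R c}"

definition unitv :: "nat \<Rightarrow> conf" where
  "unitv A = (\<lambda>X. if X = A then 1 else 0)"

definition propensity :: "real \<Rightarrow> rxn set \<Rightarrow> conf \<Rightarrow> rxn \<Rightarrow> real" where
  "propensity vol R c \<alpha> =
     (let r = fst \<alpha> in
       (if (\<exists>A. r = unitv A) then real (c (THE A. r = unitv A))
        else if (\<exists>A. r = (\<lambda>X. 2 * unitv A X)) then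
          real (c (THE A. r = (\<lambda>X. 2 * unitv A X)) choose 2) / vol
        else (case (SOME (A,B). A \<noteq> B \<and> r = (\<lambda>X. unitv A X + unitv B X)) of
               (A,B) \<Rightarrow> real (c A) * real (c B) / vol))
       / real (card (Rof R r)))"

definition total_prop :: "real \<Rightarrow> rxn set \<Rightarrow> conf \<Rightarrow> real" where
  "total_prop vol R c = (\<Sum>\<alpha>\<in>R. propensity vol R c \<alpha>)"

definition span :: "real \<Rightarrow> rxn set \<Rightarrow> conf \<Rightarrow> real" where
  "span vol R c = 1 / total_prop vol R c"

definition stop_cond :: "rxn set \<Rightarrow> (nat \<Rightarrow> conf) \<Rightarrow> (nat \<Rightarrow> rxn) \<Rightarrow> nat \<Rightarrow> rxn set \<Rightarrow> nat \<Rightarrow> bool" where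
  "stop_cond R cs as t Q s \<longleftrightarrow>
     as (s - 1) \<in> Q \<or> (\<forall>\<beta>\<in>Q. \<exists>u. t \<le> u \<and> u \<le> s \<and> \<beta> \<notin> app R (cs u))"

definition tau :: "rxn set \<Rightarrow> (nat \<Rightarrow> conf) \<Rightarrow> (nat \<Rightarrow> rxn) \<Rightarrow> nat \<Rightarrow> rxn set \<Rightarrow> nat" where
  "tau R cs as t Q = (LEAST s. t < s \<and> stop_cond R cs as t Q s)"

text \<open>Finite prefixes of a stochastic execution from c, given by the scheduled reactions.\<close>
fun run :: "conf \<Rightarrow> rxn list \<Rightarrow> conf list" where
  "run c [] = [c]"
| "run c (\<alpha> # xs) = c # run (apply_rxn \<alpha> c) xs"

fun path_prob :: "real \<Rightarrow> rxn set \<Rightarrow> conf \<Rightarrow> rxn list \<Rightarrow> real" where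
  "path_prob vol R c [] = 1"
| "path_prob vol R c (\<alpha> # xs) =
     (if \<alpha> \<in> app R c then propensity vol R c \<alpha> / total_prop vol R c else 0)
     * path_prob vol R (apply_rxn \<alpha> c) xs"

text \<open>TC: expected total time span of the steps t < tau(eta_r, 0, Q) of a stochastic
  execution from c, written as the sum over t of the expected time span of step t
  restricted to the event t < tau (which is determined by the prefix of length t).\<close>
definition TC :: "real \<Rightarrow> rxn set \<Rightarrow> rxn set \<Rightarrow> conf \<Rightarrow> ennreal" where
  "TC vol R Q c = (\<Sum>t. \<Sum>xs\<in>{xs. set xs \<subseteq> R \<and> length xs = t}.
      ennreal (path_prob vol R c xs *
        (if \<not> (\<exists>s. 0 < s \<and> s \<le> t \<and> stop_cond R (\<lambda>u. run c xs ! u) (\<lambda>i. xs ! i) 0 Q s)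
         then span vol R (last (run c xs)) else 0)))"

primrec round_start :: "rxn set \<Rightarrow> (conf \<Rightarrow> rxn set) \<Rightarrow> (nat \<Rightarrow> nat) \<Rightarrow> (nat \<Rightarrow> conf) \<Rightarrow> (nat \<Rightarrow> rxn) \<Rightarrow> nat \<Rightarrow> nat" where
  "round_start R \<rho> \<sigma> cs as 0 = 0"
| "round_start R \<rho> \<sigma> cs as (Suc i) =
     tau R cs as (\<sigma> (round_start R \<rho> \<sigma> cs as i)) (\<rho> (cs (\<sigma> (round_start R \<rho> \<sigma> cs as i))))"

definition RT_pol :: "real \<Rightarrow> nat set \<Rightarrow> rxn set \<Rightarrow> (conf \<Rightarrow> conf) \<Rightarrow> (conf \<times> conf) set
    \<Rightarrow> (conf \<Rightarrow> rxn set) \<Rightarrow> (nat \<Rightarrow> nat) \<Rightarrow> (nat \<Rightarrow> conf) \<Rightarrow> (nat \<Rightarrow> rxn) \<Rightarrow> ennreal" where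
  "RT_pol vol S R \<mu> C \<rho> \<sigma> cs as =
     (let istar = (LEAST i. round_start R \<rho> \<sigma> cs as i \<ge> halting_step S R \<mu> C cs) in
      \<Sum>i<istar. TC vol R (\<rho> (cs (\<sigma> (round_start R \<rho> \<sigma> cs as i))))
                        (cs (\<sigma> (round_start R \<rho> \<sigma> cs as i))))"

definition runtime_policy :: "nat set \<Rightarrow> rxn set \<Rightarrow> (conf \<Rightarrow> rxn set) \<Rightarrow> bool" where
  "runtime_policy S R \<rho> \<longleftrightarrow> (\<forall>c. is_config S c \<longrightarrow> \<rho> c \<subseteq> NV R)"

text \<open>RT_halt restricted to a given class Pol of runtime policies; volume function phi of n.\<close>
definition RT_halt :: "(nat \<Rightarrow> real) \<Rightarrow> nat set \<Rightarrow> rxn set \<Rightarrow> (conf \<Rightarrow> conf) \<Rightarrow> (conf \<times> conf) set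
    \<Rightarrow> (conf \<Rightarrow> rxn set) set \<Rightarrow> nat \<Rightarrow> ennreal" where
  "RT_halt \<phi> S R \<mu> C Pol n =
     (INF \<rho>\<in>{\<rho>\<in>Pol. runtime_policy S R \<rho>}.
        SUP (cs, as, \<sigma>)\<in>{(cs, as, \<sigma>). execution S R cs as \<and> weakly_fair R cs as
              \<and> valid S \<mu> C (cs 0) \<and> norm1 S (cs 0) = n \<and> (\<forall>t. t \<le> \<sigma> t)}.
          RT_pol (\<phi> n) S R \<mu> C \<rho> \<sigma> cs as)"

end

theory Submission
  imports Defs
begin

text \<open>The witness has species L, A, B and the non-void reactions 2L \<rightarrow> 2B and
  L + A \<rightarrow> L + B, started with two L's; it halts exactly when 2L \<rightarrow> 2B fires.

  With the policy {2L \<rightarrow> 2B} a single round suffices. During that round the L-count stays 2,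
  so 2L \<rightarrow> 2B has propensity 1/\<phi> and the round costs at most \<phi> = O(n) time.

  A policy that contains every escaping reaction must also wait for L + A \<rightarrow> L + B while
  an A is left, because the potential #L + #A makes every strongly connected component a
  singleton. Against the execution that converts all n - 2 A's before halting, every step is
  then a round of its own, and with m A's left the expected time until a non-void reaction
  fires is \<phi>/(2m + 1). Summing gives \<phi> (1 + 1/3 + ... + 1/(2n - 3)) \<ge> \<phi> ln n / 2,
  which is \<Omega>(n log n).\<close>

section \<open>Propensities\<close>

lemma unitv_eq_iff [simp]: "unitv A = unitv B \<longleftrightarrow> A = B"
  by (metis unitv_def zero_neq_one)

lemma propensity_unitv:
  "propensity vol R c (unitv A, p) = real (c A) / real (card (Rof R (unitv A)))"
proof -
  have "(THE B. unitv A = unitv B) = A" by auto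
  then show ?thesis unfolding propensity_def Let_def fst_conv by auto
qed

lemma propensity_double_unitv:
  "propensity vol R c ((\<lambda>X. 2 * unitv A X), p) =
     real (c A choose 2) / vol / real (card (Rof R (\<lambda>X. 2 * unitv A X)))"
proof -
  have not_unit: "\<not> (\<exists>B. (\<lambda>X. 2 * unitv A X) = unitv B)"
  proof
    assume "\<exists>B. (\<lambda>X. 2 * unitv A X) = unitv B"
    then obtain B where "(\<lambda>X. 2 * unitv A X) = unitv B" by blast
    from fun_cong[OF this, of A] show False by (simp add: unitv_def split: if_splits)
  qed
  have double: "\<exists>B. (\<lambda>X. 2 * unitv A X) = (\<lambda>X. 2 * unitv B X)" by blast
  have "(THE B. (\<lambda>X. 2 * unitv A X) = (\<lambda>X. 2 * unitv B X)) = A"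
  proof (rule the_equality)
    fix B assume "(\<lambda>X. 2 * unitv A X) = (\<lambda>X. 2 * unitv B X)"
    from fun_cong[OF this, of A] show "B = A" by (simp add: unitv_def split: if_splits)
  qed simp
  then show ?thesis unfolding propensity_def Let_def fst_conv
    by (subst if_not_P[OF not_unit], subst if_P[OF double]) simp
qed

lemma propensity_pair_unitv:
  assumes AB: "A \<noteq> B"
  shows "propensity vol R c ((\<lambda>X. unitv A X + unitv B X), p) =
    real (c A) * real (c B) / vol / real (card (Rof R (\<lambda>X. unitv A X + unitv B X)))"
proof -
  let ?r = "\<lambda>X. unitv A X + unitv B X"
  have not_unit: "\<not> (\<exists>C. ?r = unitv C)"
  proof
    assume "\<exists>C. ?r = unitv C"
    then obtain C where h: "?r = unitv C" by blast
    have "unitv A A + unitv B A = unitv C A" using fun_cong[OF h, of A] by simp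
    moreover have "unitv A B + unitv B B = unitv C B" using fun_cong[OF h, of B] by simp
    ultimately show False using AB unfolding unitv_def by (cases "A = C"; cases "B = C"; simp)
  qed
  have not_double: "\<not> (\<exists>C. ?r = (\<lambda>X. 2 * unitv C X))"
  proof
    assume "\<exists>C. ?r = (\<lambda>X. 2 * unitv C X)"
    then obtain C where h: "?r = (\<lambda>X. 2 * unitv C X)" by blast
    have "unitv A A + unitv B A = 2 * unitv C A" using fun_cong[OF h, of A] by simp
    then show False using AB unfolding unitv_def by (cases "A = C"; simp)
  qed
  txt \<open>The definition picks an ordered pair of species by SOME; either order gives the same product.\<close>
  let ?P = "\<lambda>(x, y). x \<noteq> y \<and> ?r = (\<lambda>X. unitv x X + unitv y X)"
  have "?P (A, B)" using AB by simp
  then have some_P: "?P (SOME q. ?P q)" by (rule someI)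
  obtain x y where xy: "(SOME q. ?P q) = (x, y)" by fastforce
  with some_P have xy_P: "x \<noteq> y" "?r = (\<lambda>X. unitv x X + unitv y X)" by auto
  have "unitv A x + unitv B x = unitv x x + unitv y x" using fun_cong[OF xy_P(2), of x] by simp
  then have "x \<in> {A, B}" using xy_P(1) unfolding unitv_def by (cases "x = A"; cases "x = B"; simp)
  have "unitv A y + unitv B y = unitv x y + unitv y y" using fun_cong[OF xy_P(2), of y] by simp
  then have "y \<in> {A, B}" using xy_P(1) unfolding unitv_def by (cases "y = A"; cases "y = B"; simp)
  with xy_P(1) \<open>x \<in> {A, B}\<close> have "(x = A \<and> y = B) \<or> (x = B \<and> y = A)" by auto
  then have "real (c x) * real (c y) = real (c A) * real (c B)" by auto
  then show ?thesis unfolding propensity_def Let_def fst_conv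
    by (subst if_not_P[OF not_unit], subst if_not_P[OF not_double], simp only: xy prod.case)
qed

lemma propensity_nonneg: "0 \<le> vol \<Longrightarrow> 0 \<le> propensity vol R c \<alpha>"
  unfolding propensity_def Let_def by (auto split: prod.split)

lemma propensity_eq_0_if_not_applicable:
  assumes "r = unitv A \<or> r = (\<lambda>X. 2 * unitv A X) \<or> (A \<noteq> B \<and> r = (\<lambda>X. unitv A X + unitv B X))"
    and "\<not> r \<le> c"
  shows "propensity vol R c (r, p) = 0"
  using assms(1)
proof (elim disjE conjE)
  assume r: "r = unitv A"
  with assms(2) have "c A = 0" by (auto simp: le_fun_def unitv_def split: if_splits)
  then show ?thesis unfolding r propensity_unitv by simp
next
  assume r: "r = (\<lambda>X. 2 * unitv A X)"
  with assms(2) have "c A < 2" by (auto simp: le_fun_def unitv_def split: if_splits)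
  then show ?thesis unfolding r propensity_double_unitv by simp
next
  assume "A \<noteq> B" and r: "r = (\<lambda>X. unitv A X + unitv B X)"
  with assms(2) have "c A = 0 \<or> c B = 0" by (auto simp: le_fun_def unitv_def split: if_splits)
  then show ?thesis unfolding r propensity_pair_unitv[OF \<open>A \<noteq> B\<close>] by auto
qed

lemma norm1_le_total_prop:
  assumes "crn S R" and "0 \<le> vol"
  shows "real (norm1 S c) \<le> total_prop vol R c"
proof -
  have fin: "finite S" "finite R" using assms(1) by (auto simp: crn_def)
  have unit_rxns: "(\<Sum>\<alpha>\<in>Rof R (unitv A). propensity vol R c \<alpha>) = real (c A)" if "A \<in> S" for A
  proof -
    have "norm1 S (unitv A) = 1"
      using fin(1) that by (simp add: norm1_def unitv_def)
    moreover have "supp_in S (unitv A)" using that by (simp add: supp_in_def unitv_def)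
    ultimately have "Rof R (unitv A) \<noteq> {}" using assms(1) by (auto simp: crn_def)
    moreover have "finite (Rof R (unitv A))" using fin(2) by (simp add: Rof_def)
    moreover have "\<alpha> = (unitv A, snd \<alpha>)" if "\<alpha> \<in> Rof R (unitv A)" for \<alpha>
      using that by (auto simp: Rof_def prod_eq_iff)
    then have "(\<Sum>\<alpha>\<in>Rof R (unitv A). propensity vol R c \<alpha>) =
        (\<Sum>\<alpha>\<in>Rof R (unitv A). real (c A) / real (card (Rof R (unitv A))))"
      by (intro sum.cong refl) (metis propensity_unitv)
    ultimately show ?thesis by simp
  qed
  have "real (norm1 S c) = (\<Sum>A\<in>S. \<Sum>\<alpha>\<in>Rof R (unitv A). propensity vol R c \<alpha>)"
    by (simp add: norm1_def unit_rxns)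
  also have "\<dots> = (\<Sum>\<alpha>\<in>(\<Union>A\<in>S. Rof R (unitv A)). propensity vol R c \<alpha>)"
    using fin by (intro sum.UNION_disjoint[symmetric]) (auto simp: Rof_def)
  also have "\<dots> \<le> total_prop vol R c"
    unfolding total_prop_def using fin(2) assms(2)
    by (intro sum_mono2 propensity_nonneg) (auto simp: Rof_def)
  finally show ?thesis .
qed

lemma span_le_1:
  assumes "crn S R" and "is_config S c" and "0 \<le> vol"
  shows "span vol R c \<le> 1"
proof -
  have "1 \<le> total_prop vol R c"
    using norm1_le_total_prop[OF assms(1,3), of c] assms(2) by (simp add: is_config_def)
  then show ?thesis by (simp add: span_def)
qed

lemma span_nonneg: "0 \<le> vol \<Longrightarrow> 0 \<le> span vol R c"
  unfolding span_def total_prop_def by (simp add: propensity_nonneg sum_nonneg)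

section \<open>Expected time until a reaction fires\<close>

abbreviation paths :: "'a set \<Rightarrow> nat \<Rightarrow> 'a list set" where
  "paths R t \<equiv> {xs. set xs \<subseteq> R \<and> length xs = t}"

lemma paths_0: "paths R 0 = {[]}"
  by auto

lemma sum_paths_Suc: "(\<Sum>ys\<in>paths R (Suc t). f ys) = (\<Sum>xs\<in>paths R t. \<Sum>b\<in>R. f (xs @ [b]))"
proof -
  have "paths R (Suc t) = (\<lambda>(xs, b). xs @ [b]) ` (paths R t \<times> R)"
  proof (intro equalityI subsetI)
    fix ys assume "ys \<in> paths R (Suc t)"
    then have "ys = butlast ys @ [last ys]" "butlast ys \<in> paths R t" "last ys \<in> R"
      by (auto dest: in_set_butlastD intro!: last_in_set append_butlast_last_id[symmetric])
    then show "ys \<in> (\<lambda>(xs, b). xs @ [b]) ` (paths R t \<times> R)" by force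
  qed auto
  moreover have "inj_on (\<lambda>(xs, b). xs @ [b]) (paths R t \<times> R)"
    by (auto simp: inj_on_def)
  ultimately show ?thesis
    by (simp only: sum.reindex sum.cartesian_product) (simp add: case_prod_beta)
qed

definition step_prob :: "real \<Rightarrow> rxn set \<Rightarrow> conf \<Rightarrow> rxn \<Rightarrow> real" where
  "step_prob vol R c \<alpha> = (if \<alpha> \<in> app R c then propensity vol R c \<alpha> / total_prop vol R c else 0)"

lemma path_prob_Cons:
  "path_prob vol R c (\<alpha> # xs) = step_prob vol R c \<alpha> * path_prob vol R (apply_rxn \<alpha> c) xs"
  by (simp add: step_prob_def)

lemma run_ne_Nil: "run c xs \<noteq> []"
  by (cases xs) auto

lemma path_prob_snoc:
  "path_prob vol R c (xs @ [\<alpha>]) = path_prob vol R c xs * step_prob vol R (last (run c xs)) \<alpha>"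
  by (induction xs arbitrary: c) (auto simp: step_prob_def run_ne_Nil)

lemma step_prob_nonneg: "0 \<le> vol \<Longrightarrow> 0 \<le> step_prob vol R c \<alpha>"
  unfolding step_prob_def total_prop_def by (simp add: propensity_nonneg sum_nonneg)

lemma path_prob_nonneg: "0 \<le> vol \<Longrightarrow> 0 \<le> path_prob vol R c xs"
  by (induction xs arbitrary: c)
    (auto simp del: path_prob.simps(2) simp: path_prob_Cons intro!: mult_nonneg_nonneg step_prob_nonneg)

lemma sum_step_prob_le_1:
  assumes "finite R" and "0 \<le> vol"
  shows "(\<Sum>\<alpha>\<in>R. step_prob vol R c \<alpha>) \<le> 1"
proof -
  have "(\<Sum>\<alpha>\<in>R. step_prob vol R c \<alpha>) \<le> (\<Sum>\<alpha>\<in>R. propensity vol R c \<alpha> / total_prop vol R c)"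
    unfolding step_prob_def total_prop_def using assms(2)
    by (intro sum_mono) (simp add: propensity_nonneg sum_nonneg)
  also have "\<dots> = total_prop vol R c / total_prop vol R c"
    unfolding total_prop_def by (rule sum_divide_distrib[symmetric])
  also have "\<dots> \<le> 1" by (cases "total_prop vol R c = 0") auto
  finally show ?thesis .
qed

definition tau_reached :: "rxn set \<Rightarrow> rxn set \<Rightarrow> conf \<Rightarrow> rxn list \<Rightarrow> bool" where
  "tau_reached R Q c xs \<longleftrightarrow>
     (\<exists>s. 0 < s \<and> s \<le> length xs \<and> stop_cond R (\<lambda>u. run c xs ! u) (\<lambda>i. xs ! i) 0 Q s)"

definition weighted_span :: "real \<Rightarrow> rxn set \<Rightarrow> rxn set \<Rightarrow> conf \<Rightarrow> rxn list \<Rightarrow> real" where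
  "weighted_span vol R Q c xs =
     path_prob vol R c xs * (if tau_reached R Q c xs then 0 else span vol R (last (run c xs)))"

lemma TC_eq_suminf:
  "TC vol R Q c = (\<Sum>t. \<Sum>xs\<in>paths R t. ennreal (weighted_span vol R Q c xs))"
  unfolding TC_def weighted_span_def tau_reached_def by (intro suminf_cong sum.cong) auto

lemma weighted_span_nonneg: "0 \<le> vol \<Longrightarrow> 0 \<le> weighted_span vol R Q c xs"
  unfolding weighted_span_def by (simp add: path_prob_nonneg span_nonneg)

definition avoid_prob :: "real \<Rightarrow> rxn set \<Rightarrow> conf \<Rightarrow> rxn \<Rightarrow> nat \<Rightarrow> real" where
  "avoid_prob vol R c a t = (\<Sum>xs\<in>paths R t. if a \<in> set xs then 0 else path_prob vol R c xs)"

definition first_fire_prob :: "real \<Rightarrow> rxn set \<Rightarrow> conf \<Rightarrow> rxn \<Rightarrow> nat \<Rightarrow> real" where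
  "first_fire_prob vol R c a t =
     (\<Sum>xs\<in>paths R t. if a \<in> set xs then 0 else path_prob vol R c (xs @ [a]))"

lemma first_fire_prob_add_avoid_prob_Suc_le:
  assumes "finite R" and "a \<in> R" and "0 \<le> vol"
  shows "first_fire_prob vol R c a t + avoid_prob vol R c a (Suc t) \<le> avoid_prob vol R c a t"
proof -
  have "(if a \<in> set xs then 0 else path_prob vol R c (xs @ [a]))
      + (\<Sum>b\<in>R. if a \<in> set (xs @ [b]) then 0 else path_prob vol R c (xs @ [b]))
      \<le> (if a \<in> set xs then 0 else path_prob vol R c xs)" for xs
  proof (cases "a \<in> set xs")
    case False
    let ?p = "\<lambda>b. path_prob vol R c (xs @ [b])"
    have "?p a + (\<Sum>b\<in>R. if a \<in> set (xs @ [b]) then 0 else ?p b)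
        = (\<Sum>b\<in>R. (if a = b then ?p b else 0) + (if a = b then 0 else ?p b))"
      using False assms(1,2) by (simp add: sum.distrib)
    also have "\<dots> = (\<Sum>b\<in>R. ?p b)" by (intro sum.cong) auto
    also have "\<dots> = path_prob vol R c xs * (\<Sum>b\<in>R. step_prob vol R (last (run c xs)) b)"
      by (simp add: path_prob_snoc sum_distrib_left)
    also have "\<dots> \<le> path_prob vol R c xs"
      using sum_step_prob_le_1[OF assms(1,3)] path_prob_nonneg[OF assms(3)]
      by (simp add: mult_left_le)
    finally show ?thesis using False by simp
  qed simp
  then show ?thesis
    unfolding first_fire_prob_def avoid_prob_def sum_paths_Suc sum.distrib[symmetric]
    by (intro sum_mono)
qed

lemma sum_first_fire_prob_le_1:
  assumes "finite R" and "a \<in> R" and "0 \<le> vol"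
  shows "(\<Sum>t<T. first_fire_prob vol R c a t) \<le> 1"
proof -
  have "(\<Sum>t<T. first_fire_prob vol R c a t) + avoid_prob vol R c a T \<le> 1"
  proof (induction T)
    case 0 show ?case by (simp only: avoid_prob_def paths_0) simp
  next
    case (Suc T)
    then show ?case using first_fire_prob_add_avoid_prob_Suc_le[OF assms, of c T] by simp
  qed
  moreover have "0 \<le> avoid_prob vol R c a T"
    unfolding avoid_prob_def using assms(3) by (intro sum_nonneg) (simp add: path_prob_nonneg)
  ultimately show ?thesis by linarith
qed

lemma tau_reached_if_mem:
  assumes "a \<in> set xs"
  shows "tau_reached R {a} c xs"
proof -
  obtain i where "i < length xs" "xs ! i = a" using assms by (auto simp: in_set_conv_nth)
  then show ?thesis unfolding tau_reached_def stop_cond_def by (intro exI[of _ "Suc i"]) simp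
qed

lemma weighted_span_le_path_prob_snoc:
  assumes vol: "0 \<le> vol" and "0 \<le> K"
    and rate: "a \<notin> set xs \<Longrightarrow> path_prob vol R c xs \<noteq> 0 \<Longrightarrow>
       a \<in> app R (last (run c xs)) \<and> 1 \<le> K * propensity vol R (last (run c xs)) a"
  shows "weighted_span vol R {a} c xs \<le> K * (if a \<in> set xs then 0 else path_prob vol R c (xs @ [a]))"
proof (cases "a \<notin> set xs \<and> path_prob vol R c xs \<noteq> 0")
  case True
  let ?d = "last (run c xs)" and ?p = "path_prob vol R c xs"
  have p: "0 \<le> ?p" by (rule path_prob_nonneg[OF vol])
  have T: "0 \<le> total_prop vol R ?d"
    unfolding total_prop_def using vol by (simp add: propensity_nonneg sum_nonneg)
  have a: "a \<in> app R ?d" "1 \<le> K * propensity vol R ?d a" using rate True by auto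
  have "weighted_span vol R {a} c xs \<le> ?p * span vol R ?d"
    unfolding weighted_span_def using p span_nonneg[OF vol] by auto
  also have "\<dots> = ?p * 1 / total_prop vol R ?d" by (simp add: span_def)
  also have "\<dots> \<le> ?p * (K * propensity vol R ?d a) / total_prop vol R ?d"
    by (intro divide_right_mono mult_left_mono a(2) p T)
  also have "\<dots> = K * path_prob vol R c (xs @ [a])"
    using a(1) by (simp add: path_prob_snoc step_prob_def)
  finally show ?thesis using True by simp
next
  case False
  then show ?thesis
    using tau_reached_if_mem[of a xs R c] path_prob_nonneg[OF vol] \<open>0 \<le> K\<close>
    by (auto simp: weighted_span_def)
qed

text \<open>Each step before a fires is charged to the event that a is scheduled right after it:
  its expected time span is at most K times the probability of that event, and these
  first-firing events are disjoint.\<close>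

lemma TC_singleton_le:
  assumes fin: "finite R" and "a \<in> R" and vol: "0 \<le> vol" and "0 \<le> K"
    and rate: "\<And>xs. set xs \<subseteq> R \<Longrightarrow> a \<notin> set xs \<Longrightarrow> path_prob vol R c xs \<noteq> 0 \<Longrightarrow>
       a \<in> app R (last (run c xs)) \<and> 1 \<le> K * propensity vol R (last (run c xs)) a"
  shows "TC vol R {a} c \<le> ennreal K"
proof -
  note weighted_span_le = weighted_span_le_path_prob_snoc[OF vol \<open>0 \<le> K\<close> rate]
  show ?thesis unfolding TC_eq_suminf
  proof (rule suminf_le_const[OF summableI])
    fix n
    have "(\<Sum>t<n. \<Sum>xs\<in>paths R t. ennreal (weighted_span vol R {a} c xs))
        \<le> (\<Sum>t<n. ennreal (K * first_fire_prob vol R c a t))"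
      unfolding first_fire_prob_def sum_distrib_left using \<open>0 \<le> K\<close> vol
      by (intro sum_mono, subst sum_ennreal[symmetric])
        (auto intro!: sum_mono ennreal_leI weighted_span_le mult_nonneg_nonneg path_prob_nonneg)
    also have "\<dots> = ennreal (K * (\<Sum>t<n. first_fire_prob vol R c a t))"
      unfolding sum_distrib_left first_fire_prob_def using \<open>0 \<le> K\<close> vol
      by (intro sum_ennreal) (auto intro!: sum_nonneg mult_nonneg_nonneg path_prob_nonneg)
    also have "\<dots> \<le> ennreal K"
      using sum_first_fire_prob_le_1[OF fin \<open>a \<in> R\<close> vol, of c n] \<open>0 \<le> K\<close>
      by (intro ennreal_leI) (simp add: mult_left_le)
    finally show "(\<Sum>t<n. \<Sum>xs\<in>paths R t. ennreal (weighted_span vol R {a} c xs)) \<le> ennreal K" .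
  qed
qed

lemma TC_eq_span_if_not_applicable:
  assumes "\<forall>\<beta>\<in>Q. \<beta> \<notin> app R c"
  shows "TC vol R Q c = ennreal (span vol R c)"
proof -
  have reached: "tau_reached R Q c xs" if "0 < length xs" for xs
  proof -
    have "run c xs ! 0 = c" by (cases xs) auto
    then have "stop_cond R (\<lambda>u. run c xs ! u) (\<lambda>i. xs ! i) 0 Q 1"
      using assms unfolding stop_cond_def by (auto intro!: exI[of _ 0])
    then show ?thesis using that unfolding tau_reached_def by (intro exI[of _ 1]) (auto simp: Suc_le_eq)
  qed
  then have "(\<Sum>xs\<in>paths R (Suc t). ennreal (weighted_span vol R Q c xs)) = 0" for t
    by (intro sum.neutral) (auto simp: weighted_span_def reached)
  moreover have "(\<Sum>xs\<in>paths R 0. ennreal (weighted_span vol R Q c xs)) = ennreal (span vol R c)"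
    by (simp only: paths_0) (simp add: weighted_span_def tau_reached_def)
  ultimately have "(\<Sum>xs\<in>paths R t. ennreal (weighted_span vol R Q c xs))
      = (if t = 0 then ennreal (span vol R c) else 0)" for t
    by (cases t) simp_all
  then show ?thesis
    unfolding TC_eq_suminf
    using sums_unique[OF sums_single[of 0 "\<lambda>_. ennreal (span vol R c)"]] by simp
qed

lemma apply_rxn_void: "snd \<alpha> = fst \<alpha> \<Longrightarrow> fst \<alpha> \<le> c \<Longrightarrow> apply_rxn \<alpha> c = c"
  unfolding apply_rxn_def le_fun_def by auto

lemma path_prob_void_path:
  assumes "\<forall>v\<in>V. snd v = fst v" and "set xs \<subseteq> V"
  shows "path_prob vol R c xs = prod_list (map (step_prob vol R c) xs)"
  using assms(2)
proof (induction xs)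
  case (Cons \<alpha> xs)
  then have "\<alpha> \<in> app R c \<Longrightarrow> apply_rxn \<alpha> c = c"
    using assms(1) by (intro apply_rxn_void) (auto simp: app_def)
  with Cons show ?case by (auto simp: path_prob_Cons step_prob_def)
qed simp

lemma run_void_path:
  assumes "\<forall>v\<in>V. snd v = fst v" and "set xs \<subseteq> V" and "path_prob vol R c xs \<noteq> 0"
  shows "run c xs = replicate (Suc (length xs)) c"
  using assms(2,3)
proof (induction xs)
  case (Cons \<alpha> xs)
  then have "\<alpha> \<in> app R c" by (auto split: if_splits)
  then have "apply_rxn \<alpha> c = c"
    using assms(1) Cons.prems(1) by (intro apply_rxn_void) (auto simp: app_def)
  with Cons show ?case by auto
qed simp

lemma weighted_span_void_path:
  assumes "\<forall>v\<in>V. snd v = fst v" and "Q \<inter> V = {}" and "b \<in> Q" and "b \<in> app R c"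
    and "set xs \<subseteq> V"
  shows "weighted_span vol R Q c xs = path_prob vol R c xs * span vol R c"
proof (cases "path_prob vol R c xs = 0")
  case False
  then have run: "run c xs = replicate (Suc (length xs)) c"
    using run_void_path[OF assms(1,5)] by blast
  have "\<not> tau_reached R Q c xs"
  proof
    assume "tau_reached R Q c xs"
    then obtain s where s: "0 < s" "s \<le> length xs"
      and stop: "stop_cond R (\<lambda>u. run c xs ! u) (\<lambda>i. xs ! i) 0 Q s"
      unfolding tau_reached_def by blast
    have "xs ! (s - 1) \<in> V" using s by (intro subsetD[OF assms(5)] nth_mem) simp
    then have "xs ! (s - 1) \<notin> Q" using assms(2) by blast
    then obtain u where "u \<le> s" and "b \<notin> app R (run c xs ! u)"
      using stop assms(3) unfolding stop_cond_def by blast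
    moreover have "run c xs ! u = c"
      unfolding run using \<open>u \<le> s\<close> s by (subst nth_replicate) auto
    ultimately show False using assms(4) by simp
  qed
  then show ?thesis by (simp add: weighted_span_def run)
qed (simp add: weighted_span_def)

lemma sum_paths_prod_list:
  fixes w :: "'a \<Rightarrow> real"
  assumes "finite V"
  shows "(\<Sum>xs\<in>paths V t. prod_list (map w xs)) = (\<Sum>v\<in>V. w v) ^ t"
proof (induction t)
  case 0 show ?case by (simp only: paths_0) simp
next
  case (Suc t)
  have "(\<Sum>xs\<in>paths V (Suc t). prod_list (map w xs))
      = (\<Sum>xs\<in>paths V t. prod_list (map w xs) * (\<Sum>v\<in>V. w v))"
    by (simp add: sum_paths_Suc sum_distrib_left)
  also have "\<dots> = (\<Sum>xs\<in>paths V t. prod_list (map w xs)) * (\<Sum>v\<in>V. w v)"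
    by (rule sum_distrib_right[symmetric])
  finally show ?case using Suc by simp
qed

lemma sum_weighted_span_void_paths:
  assumes "finite V" and "\<forall>v\<in>V. snd v = fst v" and "Q \<inter> V = {}" and "b \<in> Q" and "b \<in> app R c"
  shows "(\<Sum>xs\<in>paths V t. weighted_span vol R Q c xs) = (\<Sum>v\<in>V. step_prob vol R c v) ^ t * span vol R c"
proof -
  have "(\<Sum>xs\<in>paths V t. weighted_span vol R Q c xs) = (\<Sum>xs\<in>paths V t. path_prob vol R c xs * span vol R c)"
    using weighted_span_void_path[OF assms(2-5)] by (intro sum.cong) auto
  also have "\<dots> = (\<Sum>xs\<in>paths V t. prod_list (map (step_prob vol R c) xs)) * span vol R c"
    using path_prob_void_path[OF assms(2)] by (simp add: sum_distrib_right)
  finally show ?thesis by (simp add: sum_paths_prod_list[OF assms(1)])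
qed

lemma sum_step_prob_eq_1_minus:
  assumes "finite R" and "V \<subseteq> R" and "total_prop vol R c \<noteq> 0"
    and idle: "\<forall>v\<in>V. v \<notin> app R c \<longrightarrow> propensity vol R c v = 0"
  shows "(\<Sum>v\<in>V. step_prob vol R c v)
    = 1 - (\<Sum>\<alpha>\<in>R - V. propensity vol R c \<alpha>) / total_prop vol R c"
proof -
  let ?S = "\<Sum>v\<in>V. propensity vol R c v" and ?E = "\<Sum>\<alpha>\<in>R - V. propensity vol R c \<alpha>"
  have T: "total_prop vol R c = ?S + ?E"
    unfolding total_prop_def using sum.subset_diff[OF assms(2,1)] by (simp add: add.commute)
  have "(\<Sum>v\<in>V. step_prob vol R c v) = ?S / total_prop vol R c"
    unfolding step_prob_def sum_divide_distrib using idle by (intro sum.cong) auto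
  also have "\<dots> = (total_prop vol R c - ?E) / total_prop vol R c" using T by simp
  also have "\<dots> = 1 - ?E / total_prop vol R c" using assms(3) by (simp add: diff_divide_distrib)
  finally show ?thesis .
qed

text \<open>While only reactions of V fire, the configuration stays at c and tau is not reached.
  The number of such steps is geometric with ratio q, the probability of a step in V, so the
  expected time before tau is at least span(c) / (1 - q), the inverse of the propensity of R - V.
  Since total_prop sums over all reactions, applicable or not, this needs the inapplicable
  reactions of V to have propensity 0.\<close>

lemma TC_ge_inverse_propensity_nonvoid:
  assumes fin: "finite R" and "V \<subseteq> R" and void: "\<forall>v\<in>V. snd v = fst v"
    and idle: "\<forall>v\<in>V. v \<notin> app R c \<longrightarrow> propensity vol R c v = 0"
    and "Q \<inter> V = {}" and "b \<in> Q" and "b \<in> app R c" and vol: "0 \<le> vol"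
    and pos: "0 < (\<Sum>\<alpha>\<in>R - V. propensity vol R c \<alpha>)"
  shows "ennreal (1 / (\<Sum>\<alpha>\<in>R - V. propensity vol R c \<alpha>)) \<le> TC vol R Q c"
proof -
  define E where "E = (\<Sum>\<alpha>\<in>R - V. propensity vol R c \<alpha>)"
  define T where "T = total_prop vol R c"
  define q where "q = (\<Sum>v\<in>V. step_prob vol R c v)"
  have "0 < E" using pos by (simp add: E_def)
  have finV: "finite V" using fin \<open>V \<subseteq> R\<close> finite_subset by blast
  have "E \<le> T"
    unfolding E_def T_def total_prop_def using fin vol
    by (intro sum_mono2) (auto simp: propensity_nonneg)
  then have "0 < T" using \<open>0 < E\<close> by linarith
  then have q: "q = 1 - E / T"
    unfolding q_def E_def T_def using sum_step_prob_eq_1_minus[OF fin \<open>V \<subseteq> R\<close> _ idle] by simp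
  have "0 \<le> q" unfolding q_def using vol by (simp add: sum_nonneg step_prob_nonneg)
  have "q < 1" using q \<open>0 < T\<close> \<open>0 < E\<close> by simp
  have "(\<lambda>t. q ^ t * (1 / T)) sums (1 / (1 - q) * (1 / T))"
    using geometric_sums[of q] \<open>0 \<le> q\<close> \<open>q < 1\<close> by (intro sums_mult2) simp
  moreover have "1 / (1 - q) * (1 / T) = 1 / E" using q \<open>0 < T\<close> by simp
  ultimately have sums: "(\<lambda>t. q ^ t * (1 / T)) sums (1 / E)" by simp
  have "ennreal (1 / E) = ennreal (\<Sum>t. q ^ t * (1 / T))"
    using sums_unique[OF sums] by simp
  also have "\<dots> = (\<Sum>t. ennreal (q ^ t * (1 / T)))"
    using \<open>0 \<le> q\<close> \<open>0 < T\<close> by (intro suminf_ennreal2[symmetric] sums_summable[OF sums]) simp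
  also have "\<dots> \<le> (\<Sum>t. \<Sum>xs\<in>paths R t. ennreal (weighted_span vol R Q c xs))"
  proof (intro suminf_le summableI)
    fix t
    have "ennreal (q ^ t * (1 / T)) = (\<Sum>xs\<in>paths V t. ennreal (weighted_span vol R Q c xs))"
      using sum_weighted_span_void_paths[OF finV assms(3,5-7)] vol
      by (simp add: q_def T_def span_def sum_ennreal weighted_span_nonneg)
    also have "\<dots> \<le> (\<Sum>xs\<in>paths R t. ennreal (weighted_span vol R Q c xs))"
      using fin \<open>V \<subseteq> R\<close> by (intro sum_mono2 finite_lists_length_eq) auto
    finally show "ennreal (q ^ t * (1 / T)) \<le> (\<Sum>xs\<in>paths R t. ennreal (weighted_span vol R Q c xs))" .
  qed
  finally show ?thesis unfolding E_def TC_eq_suminf .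
qed

section \<open>Rounds and escaping reactions\<close>

lemma tau_eq_Suc:
  assumes "as t \<in> Q"
  shows "tau R cs as t Q = Suc t"
  unfolding tau_def
proof (rule Least_equality)
  show "t < Suc t \<and> stop_cond R cs as t Q (Suc t)" using assms by (simp add: stop_cond_def)
qed simp

lemma tau_stop_cond:
  assumes "t < s" and "stop_cond R cs as t Q s"
  shows "t < tau R cs as t Q \<and> stop_cond R cs as t Q (tau R cs as t Q)"
  unfolding tau_def by (rule LeastI[of _ s]) (use assms in blast)

lemma execution_step: "execution S R cs as \<Longrightarrow> is_config S (cs t) \<Longrightarrow> step S R (cs t) (cs (Suc t))"
  by (auto simp: execution_def step_def)

lemma weakly_fair_stop_cond:
  assumes "weakly_fair R cs as"
  shows "\<exists>s>t. stop_cond R cs as t {\<alpha>} s"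
proof (cases "\<alpha> \<in> app R (cs t)")
  case True
  then obtain s where "t \<le> s" and "as s = \<alpha> \<or> \<alpha> \<notin> app R (cs s)"
    using assms unfolding weakly_fair_def by blast
  then have "stop_cond R cs as t {\<alpha>} (Suc s)" unfolding stop_cond_def by auto
  then show ?thesis using \<open>t \<le> s\<close> le_imp_less_Suc by blast
next
  case False
  then have "stop_cond R cs as t {\<alpha>} (Suc t)" unfolding stop_cond_def by auto
  then show ?thesis by blast
qed

lemma RT_pol_le_TC_first_round:
  assumes "halting_step S R \<mu> C cs \<le> round_start R \<rho> \<sigma> cs as 1"
  shows "RT_pol vol S R \<mu> C \<rho> \<sigma> cs as \<le> TC vol R (\<rho> (cs (\<sigma> 0))) (cs (\<sigma> 0))"
proof -
  let ?e = "\<lambda>i. cs (\<sigma> (round_start R \<rho> \<sigma> cs as i))"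
  have "(LEAST i. halting_step S R \<mu> C cs \<le> round_start R \<rho> \<sigma> cs as i) \<le> 1"
    using assms by (rule Least_le)
  then have "RT_pol vol S R \<mu> C \<rho> \<sigma> cs as \<le> (\<Sum>i<1. TC vol R (\<rho> (?e i)) (?e i))"
    unfolding RT_pol_def Let_def by (intro sum_mono2) auto
  then show ?thesis by simp
qed

lemma round_start_eq_if_steps_in_policy:
  assumes "\<forall>i<k. as i \<in> \<rho> (cs i)" and "i \<le> k"
  shows "round_start R \<rho> (\<lambda>t. t) cs as i = i"
  using assms(2) by (induction i) (simp_all add: assms(1) tau_eq_Suc)

lemma RT_pol_eq_sum_if_steps_in_policy:
  assumes "\<forall>i\<le>k. as i \<in> \<rho> (cs i)" and "halting_step S R \<mu> C cs = Suc k"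
  shows "RT_pol vol S R \<mu> C \<rho> (\<lambda>t. t) cs as = (\<Sum>i\<le>k. TC vol R (\<rho> (cs i)) (cs i))"
proof -
  have start: "round_start R \<rho> (\<lambda>t. t) cs as i = i" if "i \<le> Suc k" for i
    using assms(1) that by (intro round_start_eq_if_steps_in_policy) auto
  have "(LEAST i. halting_step S R \<mu> C cs \<le> round_start R \<rho> (\<lambda>t. t) cs as i) = Suc k"
  proof (rule Least_equality)
    fix i assume "halting_step S R \<mu> C cs \<le> round_start R \<rho> (\<lambda>t. t) cs as i"
    then show "Suc k \<le> i" using start[of i] assms(2) by (cases "i \<le> Suc k") auto
  qed (use start[of "Suc k"] assms(2) in simp)
  then show ?thesis
    unfolding RT_pol_def Let_def lessThan_Suc_atMost[symmetric] by (intro sum.cong) (auto simp: start)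
qed

lemma scc_eq_singleton_if_potential:
  fixes f :: "conf \<Rightarrow> nat"
  assumes "\<And>x y. step S R x y \<Longrightarrow> y = x \<or> f y < f x"
  shows "scc S R c = {c}"
proof -
  have decr: "d = x \<or> f d < f x" if "reach S R x d" for x d
    using that unfolding reach_def
    by (induction rule: rtranclp_induct) (auto dest: assms)
  have "d = c" if "d \<in> scc S R c" for d
    using that decr[of c d] decr[of d c] by (auto simp: scc_def)
  moreover have "c \<in> scc S R c" by (simp add: scc_def reach_def)
  ultimately show ?thesis by blast
qed

lemma mem_escape_if_scc_singleton:
  assumes "scc S R c = {c}" and "\<alpha> \<in> app R c" and "apply_rxn \<alpha> c \<noteq> c"
  shows "\<alpha> \<in> escape S R c"
  using assms by (auto simp: escape_def app_def)

section \<open>The protocol\<close>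

text \<open>Species 0, 1 and 2 play the roles of L, A and B.\<close>

definition conf3 :: "nat \<Rightarrow> nat \<Rightarrow> nat \<Rightarrow> conf" where
  "conf3 l a b = (\<lambda>X. if X = 0 then l else if X = 1 then a else if X = 2 then b else 0)"

lemma conf3_apply [simp]:
  "conf3 l a b 0 = l" "conf3 l a b 1 = a" "conf3 l a b (Suc 0) = a" "conf3 l a b 2 = b"
  by (auto simp: conf3_def)

lemma conf3_eq_iff [simp]: "conf3 l a b = conf3 l' a' b' \<longleftrightarrow> l = l' \<and> a = a' \<and> b = b'"
  by (metis conf3_apply(1,2,4))

lemma conf3_le_iff: "conf3 l a b \<le> c \<longleftrightarrow> l \<le> c 0 \<and> a \<le> c 1 \<and> b \<le> c 2"
proof
  assume "conf3 l a b \<le> c"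
  then show "l \<le> c 0 \<and> a \<le> c 1 \<and> b \<le> c 2" unfolding le_fun_def by (metis conf3_apply(1,2,4))
next
  assume "l \<le> c 0 \<and> a \<le> c 1 \<and> b \<le> c 2"
  then show "conf3 l a b \<le> c" unfolding le_fun_def conf3_def by auto
qed

lemma conf3_unitv:
  "conf3 1 0 0 = unitv 0" "conf3 0 1 0 = unitv 1" "conf3 0 0 1 = unitv 2"
  "conf3 2 0 0 = (\<lambda>X. 2 * unitv 0 X)" "conf3 0 2 0 = (\<lambda>X. 2 * unitv 1 X)"
  "conf3 0 0 2 = (\<lambda>X. 2 * unitv 2 X)"
  "conf3 1 1 0 = (\<lambda>X. unitv 0 X + unitv 1 X)" "conf3 1 0 1 = (\<lambda>X. unitv 0 X + unitv 2 X)"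
  "conf3 0 1 1 = (\<lambda>X. unitv 1 X + unitv 2 X)"
  by (auto simp: conf3_def unitv_def)

definition lab_species :: "nat set" where
  "lab_species = {0, 1, 2}"

lemma norm1_lab_species: "norm1 lab_species c = c 0 + c 1 + c 2"
  by (simp add: norm1_def lab_species_def)

lemma supp_in_conf3: "supp_in lab_species (conf3 l a b)"
  by (simp add: supp_in_def lab_species_def conf3_def)

lemma conf3_components: "supp_in lab_species c \<Longrightarrow> conf3 (c 0) (c 1) (c 2) = c"
  by (auto simp: supp_in_def lab_species_def conf3_def)

lemma is_config_conf3: "1 \<le> l + a + b \<Longrightarrow> is_config lab_species (conf3 l a b)"
  by (simp add: is_config_def supp_in_conf3 norm1_lab_species)

definition rxn_LL :: rxn where
  "rxn_LL = (conf3 2 0 0, conf3 0 0 2)"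

definition rxn_LA :: rxn where
  "rxn_LA = (conf3 1 1 0, conf3 1 0 1)"

definition lab_voids :: "rxn set" where
  "lab_voids = (\<lambda>r. (r, r)) `
     {conf3 1 0 0, conf3 0 1 0, conf3 0 0 1, conf3 0 2 0, conf3 0 0 2, conf3 1 0 1, conf3 0 1 1}"

definition lab_rxns :: "rxn set" where
  "lab_rxns = insert rxn_LL (insert rxn_LA lab_voids)"

lemma finite_lab_rxns: "finite lab_rxns"
  by (simp add: lab_rxns_def lab_voids_def)

lemma lab_voids_subset: "lab_voids \<subseteq> lab_rxns"
  by (auto simp: lab_rxns_def)

lemma rxn_LL_in_lab_rxns: "rxn_LL \<in> lab_rxns" and rxn_LA_in_lab_rxns: "rxn_LA \<in> lab_rxns"
  by (simp_all add: lab_rxns_def)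

lemma rxn_LL_ne_rxn_LA: "rxn_LL \<noteq> rxn_LA"
  by (simp add: rxn_LL_def rxn_LA_def)

lemma lab_voids_void: "v \<in> lab_voids \<Longrightarrow> snd v = fst v"
  by (auto simp: lab_voids_def)

lemma lab_rxns_minus_voids: "lab_rxns - lab_voids = {rxn_LL, rxn_LA}"
  by (auto simp: lab_rxns_def lab_voids_def rxn_LL_def rxn_LA_def)

lemma NV_lab_rxns: "NV lab_rxns = {rxn_LL, rxn_LA}"
  by (auto simp: NV_def lab_rxns_def lab_voids_def rxn_LL_def rxn_LA_def)

lemma Rof_lab_rxns: "\<alpha> \<in> lab_rxns \<Longrightarrow> Rof lab_rxns (fst \<alpha>) = {\<alpha>}"
  by (auto simp: Rof_def lab_rxns_def lab_voids_def rxn_LL_def rxn_LA_def)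

lemma propensity_rxn_LL: "propensity vol lab_rxns c rxn_LL = real (c 0 choose 2) / vol"
  using Rof_lab_rxns[OF rxn_LL_in_lab_rxns] unfolding rxn_LL_def conf3_unitv
  by (simp add: propensity_double_unitv)

lemma propensity_rxn_LA: "propensity vol lab_rxns c rxn_LA = real (c 0) * real (c 1) / vol"
  using Rof_lab_rxns[OF rxn_LA_in_lab_rxns] unfolding rxn_LA_def conf3_unitv
  by (simp add: propensity_pair_unitv)

lemma propensity_lab_voids_idle:
  assumes "v \<in> lab_voids" and "v \<notin> app lab_rxns c"
  shows "propensity vol lab_rxns c v = 0"
proof -
  obtain r where v: "v = (r, r)"
    and "r \<in> {unitv 0, unitv 1, unitv 2, (\<lambda>X. 2 * unitv 1 X), (\<lambda>X. 2 * unitv 2 X),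
       (\<lambda>X. unitv 0 X + unitv 2 X), (\<lambda>X. unitv 1 X + unitv 2 X)}"
    using assms(1) unfolding lab_voids_def conf3_unitv by blast
  then obtain A B :: nat where
    "r = unitv A \<or> r = (\<lambda>X. 2 * unitv A X) \<or> (A \<noteq> B \<and> r = (\<lambda>X. unitv A X + unitv B X))"
    by (elim insertE emptyE) (auto intro: that that[of 0 2] that[of 1 2])
  moreover have "\<not> r \<le> c" using assms lab_voids_subset by (auto simp: app_def v)
  ultimately show ?thesis unfolding v by (rule propensity_eq_0_if_not_applicable)
qed

lemma crn_lab: "crn lab_species lab_rxns"
proof -
  have "supp_in lab_species r \<and> supp_in lab_species p
      \<and> norm1 lab_species r \<in> {1, 2} \<and> norm1 lab_species r \<le> norm1 lab_species p"
    if "(r, p) \<in> lab_rxns" for r p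
    using that by (auto simp: lab_rxns_def lab_voids_def rxn_LL_def rxn_LA_def
        supp_in_conf3 norm1_lab_species)
  moreover have "Rof lab_rxns r \<noteq> {}"
    if "supp_in lab_species r" "1 \<le> norm1 lab_species r" "norm1 lab_species r \<le> 2" for r
  proof -
    have sum: "1 \<le> r 0 + r 1 + r 2" "r 0 + r 1 + r 2 \<le> 2"
      using that(2,3) by (simp_all add: norm1_lab_species)
    then have "r 0 \<in> {0, 1, 2}" "r 1 \<in> {0, 1, 2}" "r 2 \<in> {0, 1, 2}" by auto
    then have "\<exists>\<alpha>\<in>lab_rxns. fst \<alpha> = conf3 (r 0) (r 1) (r 2)"
      using sum unfolding insert_iff empty_iff
      by (elim disjE) (simp_all add: lab_rxns_def lab_voids_def rxn_LL_def rxn_LA_def)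
    then show ?thesis using conf3_components[OF that(1)] by (auto simp: Rof_def)
  qed
  moreover have "Rof lab_rxns r = {(r, r)}" if "(r, r) \<in> lab_rxns" for r
    using Rof_lab_rxns[OF that] by simp
  ultimately show ?thesis
    by (auto simp: crn_def lab_species_def finite_lab_rxns)
qed

lemma apply_rxn_conf3_conf3:
  "apply_rxn (conf3 l a b, conf3 l' a' b') (conf3 x y z) = conf3 (x - l + l') (y - a + a') (z - b + b')"
  by (auto simp: apply_rxn_def conf3_def fun_eq_iff)

lemma step_lab_cases:
  assumes "step lab_species lab_rxns c c'"
  shows "c' = c
    \<or> 2 \<le> c 0 \<and> c' = conf3 (c 0 - 2) (c 1) (c 2 + 2)
    \<or> 1 \<le> c 0 \<and> 1 \<le> c 1 \<and> c' = conf3 (c 0) (c 1 - 1) (c 2 + 1)"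
proof -
  obtain \<alpha> where "\<alpha> \<in> lab_rxns" and le: "fst \<alpha> \<le> c" and step_eq: "c' = apply_rxn \<alpha> c"
    and "supp_in lab_species c"
    using assms by (auto simp: step_def app_def is_config_def)
  then have step_conf3: "c' = apply_rxn \<alpha> (conf3 (c 0) (c 1) (c 2))"
    using conf3_components by simp
  consider "\<alpha> = rxn_LL" | "\<alpha> = rxn_LA" | "\<alpha> \<in> lab_voids"
    using \<open>\<alpha> \<in> lab_rxns\<close> by (auto simp: lab_rxns_def)
  then show ?thesis
  proof cases
    case 1
    then show ?thesis using le step_conf3 by (simp add: rxn_LL_def conf3_le_iff apply_rxn_conf3_conf3)
  next
    case 2
    then show ?thesis using le step_conf3 by (simp add: rxn_LA_def conf3_le_iff apply_rxn_conf3_conf3)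
  next
    case 3
    then show ?thesis using le step_eq by (simp add: apply_rxn_void lab_voids_void)
  qed
qed

lemma step_lab_is_config:
  assumes "step lab_species lab_rxns c c'"
  shows "is_config lab_species c' \<and> norm1 lab_species c' = norm1 lab_species c"
proof -
  have "is_config lab_species c" using assms by (simp add: step_def)
  then show ?thesis
    using step_lab_cases[OF assms] by (auto simp: is_config_def supp_in_conf3 norm1_lab_species)
qed

lemma reach_lab_norm1: "reach lab_species lab_rxns c d \<Longrightarrow> norm1 lab_species d = norm1 lab_species c"
  unfolding reach_def by (induction rule: rtranclp_induct) (auto dest: step_lab_is_config)

lemma reach_lab_no_L: "reach lab_species lab_rxns c d \<Longrightarrow> c 0 = 0 \<Longrightarrow> d = c"
  unfolding reach_def by (induction rule: rtranclp_induct) (auto dest: step_lab_cases)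

lemma scc_lab: "scc lab_species lab_rxns c = {c}"
  by (rule scc_eq_singleton_if_potential[where f = "\<lambda>c. c 0 + c 1"]) (auto dest: step_lab_cases)

lemma rxn_LL_app_iff: "rxn_LL \<in> app lab_rxns c \<longleftrightarrow> 2 \<le> c 0"
  using rxn_LL_in_lab_rxns by (simp add: app_def rxn_LL_def conf3_le_iff)

lemma rxn_LA_app_iff: "rxn_LA \<in> app lab_rxns c \<longleftrightarrow> 1 \<le> c 0 \<and> 1 \<le> c 1"
  using rxn_LA_in_lab_rxns by (simp add: app_def rxn_LA_def conf3_le_iff)

lemma rxn_LL_in_escape: "2 \<le> c 0 \<Longrightarrow> rxn_LL \<in> escape lab_species lab_rxns c"
  using rxn_LL_app_iff[of c] by (intro mem_escape_if_scc_singleton[OF scc_lab])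
    (auto simp: rxn_LL_def fun_eq_iff apply_rxn_def intro!: exI[of _ 0])

lemma rxn_LA_in_escape: "1 \<le> c 0 \<Longrightarrow> 1 \<le> c 1 \<Longrightarrow> rxn_LA \<in> escape lab_species lab_rxns c"
  using rxn_LA_app_iff[of c] by (intro mem_escape_if_scc_singleton[OF scc_lab])
    (auto simp: rxn_LA_def fun_eq_iff apply_rxn_def intro!: exI[of _ 1])

definition lab_rel :: "(conf \<times> conf) set" where
  "lab_rel = {(c0, c). c0 0 = 2 \<and> c 0 = 0}"

lemma target_lab_rel:
  "target lab_species id lab_rel c0 = {c. is_config lab_species c \<and> c0 0 = 2 \<and> c 0 = 0}"
  by (auto simp: target_def lab_rel_def)

lemma valid_lab_rel_iff: "valid lab_species id lab_rel c0 \<longleftrightarrow> is_config lab_species c0 \<and> c0 0 = 2"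
  using is_config_conf3[of 0 0 1] by (auto simp: valid_def target_lab_rel)

lemma halt_lab_rel:
  "is_config lab_species c \<Longrightarrow> c0 0 = 2 \<Longrightarrow> c 0 = 0
    \<Longrightarrow> c \<in> halt lab_species lab_rxns (target lab_species id lab_rel c0)"
  by (auto simp: halt_def target_lab_rel dest: reach_lab_no_L)

lemma execution_lab_invariant:
  assumes "execution lab_species lab_rxns cs as" and "cs 0 0 = 2"
  shows "is_config lab_species (cs t) \<and> (cs t 0 = 2 \<or> cs t 0 = 0)"
proof (induction t)
  case 0
  show ?case using assms by (simp add: execution_def)
next
  case (Suc t)
  then have "step lab_species lab_rxns (cs t) (cs (Suc t))" by (intro execution_step[OF assms(1)]) simp
  then show ?case using Suc step_lab_is_config step_lab_cases[of "cs t" "cs (Suc t)"] by auto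
qed

lemma lab_rxns_L_catalytic: "\<alpha> \<in> lab_rxns \<Longrightarrow> \<alpha> \<noteq> rxn_LL \<Longrightarrow> snd \<alpha> 0 = fst \<alpha> 0"
  by (auto simp: lab_rxns_def lab_voids_def rxn_LA_def)

lemma apply_rxn_rxn_LL_L: "apply_rxn rxn_LL c 0 = c 0 - 2"
  by (simp add: rxn_LL_def apply_rxn_def)

lemma execution_lab_rxn_LL_removes_L:
  assumes "execution lab_species lab_rxns cs as" and "cs 0 0 = 2" and "as s = rxn_LL"
  shows "cs (Suc s) 0 = 0"
proof -
  have "rxn_LL \<in> app lab_rxns (cs s)" and "cs (Suc s) = apply_rxn rxn_LL (cs s)"
    using assms(1) unfolding execution_def assms(3)[symmetric] by blast+
  then show ?thesis
    using execution_lab_invariant[OF assms(1,2), of s] by (auto simp: rxn_LL_app_iff apply_rxn_rxn_LL_L)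
qed

lemma halting_step_lab_le:
  assumes "execution lab_species lab_rxns cs as" and "cs 0 0 = 2" and "cs u 0 = 0"
  shows "halting_step lab_species lab_rxns id lab_rel cs \<le> u"
  unfolding halting_step_def
  using halt_lab_rel execution_lab_invariant[OF assms(1,2)] assms(2,3) by (intro Least_le) blast

lemma execution_lab_no_L_by_tau:
  assumes "execution lab_species lab_rxns cs as" and "weakly_fair lab_rxns cs as" and "cs 0 0 = 2"
  shows "\<exists>u\<le>tau lab_rxns cs as t {rxn_LL}. cs u 0 = 0"
proof -
  let ?s = "tau lab_rxns cs as t {rxn_LL}"
  obtain s where "t < s" "stop_cond lab_rxns cs as t {rxn_LL} s"
    using weakly_fair_stop_cond[OF assms(2)] by blast
  then have "t < ?s" and "stop_cond lab_rxns cs as t {rxn_LL} ?s" by (blast dest: tau_stop_cond)+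
  then consider "as (?s - 1) = rxn_LL" | u where "u \<le> ?s" "rxn_LL \<notin> app lab_rxns (cs u)"
    unfolding stop_cond_def by blast
  then show ?thesis
  proof cases
    case 1
    then have "cs (Suc (?s - 1)) 0 = 0" by (rule execution_lab_rxn_LL_removes_L[OF assms(1,3)])
    moreover have "Suc (?s - 1) = ?s" using \<open>t < ?s\<close> by simp
    ultimately show ?thesis by auto
  next
    case 2
    then show ?thesis using execution_lab_invariant[OF assms(1,3), of u] by (auto simp: rxn_LL_app_iff)
  qed
qed

lemma halting_correct_lab: "halting_correct lab_species lab_rxns id lab_rel"
  unfolding halting_correct_def
proof (intro allI impI, elim conjE)
  fix cs as
  assume exec: "execution lab_species lab_rxns cs as" and "weakly_fair lab_rxns cs as"
    and "valid lab_species id lab_rel (cs 0)"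
  then have "cs 0 0 = 2" by (simp add: valid_lab_rel_iff)
  then obtain u where "cs u 0 = 0"
    using execution_lab_no_L_by_tau[OF exec \<open>weakly_fair lab_rxns cs as\<close>] by blast
  then show "\<exists>t. cs t \<in> halt lab_species lab_rxns (target lab_species id lab_rel (cs 0))"
    using halt_lab_rel execution_lab_invariant[OF exec \<open>cs 0 0 = 2\<close>] \<open>cs 0 0 = 2\<close> by blast
qed

lemma interface_lab: "interface lab_species UNIV id lab_rel"
  by (simp add: interface_def)

lemma finite_density_lab: "finite_density lab_species lab_rxns id lab_rel"
  unfolding finite_density_def by (auto intro!: exI[of _ 1] dest: reach_lab_norm1)

section \<open>Runtime bounds\<close>

lemma last_run_L_count:
  assumes "set xs \<subseteq> lab_rxns" and "rxn_LL \<notin> set xs" and "path_prob vol lab_rxns c xs \<noteq> 0"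
  shows "last (run c xs) 0 = c 0"
  using assms
proof (induction xs arbitrary: c)
  case (Cons \<alpha> xs)
  then have "\<alpha> \<in> app lab_rxns c" by (auto split: if_splits)
  then have "apply_rxn \<alpha> c 0 = c 0"
    using Cons.prems lab_rxns_L_catalytic[of \<alpha>] by (auto simp: apply_rxn_def app_def le_fun_def)
  moreover have "path_prob vol lab_rxns (apply_rxn \<alpha> c) xs \<noteq> 0" using Cons.prems(3) by auto
  ultimately show ?case using Cons by (simp add: run_ne_Nil)
qed simp

lemma TC_rxn_LL_le:
  assumes "0 < vol" and "is_config lab_species c"
  shows "TC vol lab_rxns {rxn_LL} c \<le> ennreal (max vol 1)"
proof (cases "2 \<le> c 0")
  case True
  have "TC vol lab_rxns {rxn_LL} c \<le> ennreal vol"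
  proof (rule TC_singleton_le[OF finite_lab_rxns rxn_LL_in_lab_rxns])
    fix xs assume "set xs \<subseteq> lab_rxns" "rxn_LL \<notin> set xs" "path_prob vol lab_rxns c xs \<noteq> 0"
    then have L: "last (run c xs) 0 = c 0" by (rule last_run_L_count)
    have "1 \<le> c 0 choose 2" using True by (simp add: Suc_leI)
    then show "rxn_LL \<in> app lab_rxns (last (run c xs))
        \<and> 1 \<le> vol * propensity vol lab_rxns (last (run c xs)) rxn_LL"
      using L True \<open>0 < vol\<close> by (simp add: rxn_LL_app_iff propensity_rxn_LL)
  qed (use \<open>0 < vol\<close> in auto)
  then show ?thesis by (rule order.trans) (simp add: ennreal_leI)
next
  case False
  then have "TC vol lab_rxns {rxn_LL} c = ennreal (span vol lab_rxns c)"
    by (intro TC_eq_span_if_not_applicable) (simp add: rxn_LL_app_iff)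
  also have "\<dots> \<le> ennreal (max vol 1)"
    using span_le_1[OF crn_lab assms(2), of vol] \<open>0 < vol\<close> by (intro ennreal_leI) simp
  finally show ?thesis .
qed

lemma TC_lab_ge:
  assumes "0 < vol" and "c 0 = 2" and "rxn_LL \<in> Q" and "Q \<subseteq> NV lab_rxns"
  shows "ennreal (vol / (2 * real (c 1) + 1)) \<le> TC vol lab_rxns Q c"
proof -
  have rate: "(\<Sum>\<alpha>\<in>lab_rxns - lab_voids. propensity vol lab_rxns c \<alpha>) = (2 * real (c 1) + 1) / vol"
    using assms(2) rxn_LL_ne_rxn_LA
    by (simp add: lab_rxns_minus_voids propensity_rxn_LL propensity_rxn_LA add_divide_distrib)
  have "ennreal (1 / (\<Sum>\<alpha>\<in>lab_rxns - lab_voids. propensity vol lab_rxns c \<alpha>)) \<le> TC vol lab_rxns Q c"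
  proof (rule TC_ge_inverse_propensity_nonvoid[OF finite_lab_rxns lab_voids_subset])
    show "Q \<inter> lab_voids = {}"
      using assms(4) lab_rxns_minus_voids by (auto simp: NV_lab_rxns)
    show "rxn_LL \<in> app lab_rxns c" using assms(2) by (simp add: rxn_LL_app_iff)
  qed (use assms rate lab_voids_void propensity_lab_voids_idle in auto)
  then show ?thesis using rate by simp
qed

lemma RT_pol_lab_le:
  assumes exec: "execution lab_species lab_rxns cs as" and "weakly_fair lab_rxns cs as"
    and "cs 0 0 = 2" and "0 < vol"
  shows "RT_pol vol lab_species lab_rxns id lab_rel (\<lambda>_. {rxn_LL}) \<sigma> cs as \<le> ennreal (max vol 1)"
proof -
  obtain u where "u \<le> round_start lab_rxns (\<lambda>_. {rxn_LL}) \<sigma> cs as 1" and "cs u 0 = 0"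
    using execution_lab_no_L_by_tau[OF assms(1-3)] by auto
  then have "halting_step lab_species lab_rxns id lab_rel cs \<le> round_start lab_rxns (\<lambda>_. {rxn_LL}) \<sigma> cs as 1"
    using halting_step_lab_le[OF exec \<open>cs 0 0 = 2\<close>] order.trans by blast
  then have "RT_pol vol lab_species lab_rxns id lab_rel (\<lambda>_. {rxn_LL}) \<sigma> cs as
      \<le> TC vol lab_rxns {rxn_LL} (cs (\<sigma> 0))"
    by (rule RT_pol_le_TC_first_round)
  also have "\<dots> \<le> ennreal (max vol 1)"
    using TC_rxn_LL_le \<open>0 < vol\<close> execution_lab_invariant[OF exec \<open>cs 0 0 = 2\<close>] by blast
  finally show ?thesis .
qed

text \<open>From two L's and k A's, all A's are converted before 2L \<rightarrow> 2B fires; afterwards the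
  execution alternates the void reactions B \<rightarrow> B and 2B \<rightarrow> 2B so that it is weakly fair.\<close>

definition slow_conf :: "nat \<Rightarrow> nat \<Rightarrow> conf" where
  "slow_conf k t = (if t \<le> k then conf3 2 (k - t) t else conf3 0 0 (k + 2))"

definition slow_rxn :: "nat \<Rightarrow> nat \<Rightarrow> rxn" where
  "slow_rxn k t =
     (if t < k then rxn_LA else if t = k then rxn_LL
      else if even t then (conf3 0 0 1, conf3 0 0 1) else (conf3 0 0 2, conf3 0 0 2))"

lemma is_config_slow_conf: "is_config lab_species (slow_conf k t)"
  by (auto simp: slow_conf_def intro!: is_config_conf3)

lemma valid_slow_conf_0:
  "valid lab_species id lab_rel (slow_conf k 0) \<and> norm1 lab_species (slow_conf k 0) = k + 2"
  using is_config_slow_conf[of k 0] by (simp add: valid_lab_rel_iff norm1_lab_species slow_conf_def)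

lemma app_lab_rxns_only_B:
  "app lab_rxns (conf3 0 0 m) \<subseteq> {(conf3 0 0 1, conf3 0 0 1), (conf3 0 0 2, conf3 0 0 2)}"
  by (auto simp: app_def lab_rxns_def lab_voids_def rxn_LL_def rxn_LA_def conf3_le_iff)

lemma execution_slow: "execution lab_species lab_rxns (slow_conf k) (slow_rxn k)"
proof -
  have "slow_rxn k t \<in> app lab_rxns (slow_conf k t)
      \<and> slow_conf k (Suc t) = apply_rxn (slow_rxn k t) (slow_conf k t)" for t
  proof -
    consider "t < k" | "t = k" | "k < t" by linarith
    then show ?thesis
    proof cases
      case 1
      then show ?thesis
        by (simp add: slow_rxn_def slow_conf_def rxn_LA_app_iff)
          (simp add: rxn_LA_def apply_rxn_conf3_conf3)
    next
      case 2
      then show ?thesis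
        by (simp add: slow_rxn_def slow_conf_def rxn_LL_app_iff)
          (simp add: rxn_LL_def apply_rxn_conf3_conf3)
    next
      case 3
      then have "slow_rxn k t \<in> lab_voids" "fst (slow_rxn k t) \<le> slow_conf k t"
        by (auto simp: slow_rxn_def slow_conf_def lab_voids_def conf3_le_iff)
      then show ?thesis using 3 lab_voids_subset
        by (auto simp: app_def apply_rxn_void lab_voids_void slow_conf_def)
    qed
  qed
  then show ?thesis using is_config_slow_conf by (simp add: execution_def)
qed

lemma weakly_fair_slow: "weakly_fair lab_rxns (slow_conf k) (slow_rxn k)"
  unfolding weakly_fair_def
proof (intro allI ballI)
  fix t \<beta> assume "\<beta> \<in> app lab_rxns (slow_conf k t)"
  define s where "s = max t (Suc k)"
  have "t \<le> s" "k < s" by (simp_all add: s_def)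
  then have "slow_conf k s = conf3 0 0 (k + 2)" by (simp add: slow_conf_def)
  moreover have "{slow_rxn k s, slow_rxn k (Suc s)}
      = {(conf3 0 0 1, conf3 0 0 1), (conf3 0 0 2, conf3 0 0 2)}"
    using \<open>k < s\<close> by (cases "even s") (auto simp: slow_rxn_def)
  ultimately have "app lab_rxns (slow_conf k s) \<subseteq> {slow_rxn k s, slow_rxn k (Suc s)}"
    using app_lab_rxns_only_B[of "k + 2"] by (simp only:)
  then consider "\<beta> \<notin> app lab_rxns (slow_conf k s)" | "\<beta> = slow_rxn k s" | "\<beta> = slow_rxn k (Suc s)"
    by (meson insertE singletonD subsetD)
  then show "\<exists>s'\<ge>t. slow_rxn k s' = \<beta> \<or> \<beta> \<notin> app lab_rxns (slow_conf k s')"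
    by cases (use \<open>t \<le> s\<close> le_SucI in blast)+
qed

lemma halting_step_slow: "halting_step lab_species lab_rxns id lab_rel (slow_conf k) = Suc k"
  unfolding halting_step_def
proof (rule Least_equality)
  show "slow_conf k (Suc k) \<in> halt lab_species lab_rxns (target lab_species id lab_rel (slow_conf k 0))"
    by (intro halt_lab_rel is_config_slow_conf) (auto simp: slow_conf_def)
  fix t assume "slow_conf k t \<in> halt lab_species lab_rxns (target lab_species id lab_rel (slow_conf k 0))"
  then show "Suc k \<le> t" by (cases "t \<le> k") (auto simp: halt_def target_lab_rel slow_conf_def)
qed

lemma RT_pol_slow_ge:
  assumes "0 < vol" and escape: "\<forall>c. is_config lab_species c \<longrightarrow> escape lab_species lab_rxns c \<subseteq> \<rho> c"
    and "runtime_policy lab_species lab_rxns \<rho>"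
  shows "ennreal (vol * (\<Sum>j\<le>k. 1 / (2 * real j + 1)))
    \<le> RT_pol vol lab_species lab_rxns id lab_rel \<rho> (\<lambda>t. t) (slow_conf k) (slow_rxn k)"
proof -
  have conf: "slow_conf k i = conf3 2 (k - i) i" if "i \<le> k" for i
    using that by (simp add: slow_conf_def)
  have policy: "\<rho> (slow_conf k i) \<subseteq> NV lab_rxns" for i
    using assms(3) is_config_slow_conf by (auto simp: runtime_policy_def)
  have escapes: "escape lab_species lab_rxns (slow_conf k i) \<subseteq> \<rho> (slow_conf k i)" for i
    using escape is_config_slow_conf by blast
  have LL: "rxn_LL \<in> \<rho> (slow_conf k i)" if "i \<le> k" for i
    using escapes[of i] rxn_LL_in_escape[of "slow_conf k i"] conf[OF that] by auto
  have LA: "rxn_LA \<in> \<rho> (slow_conf k i)" if "i < k" for i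
    using escapes[of i] rxn_LA_in_escape[of "slow_conf k i"] conf that by auto
  have "slow_rxn k i \<in> \<rho> (slow_conf k i)" if "i \<le> k" for i
    using that LL LA by (auto simp: slow_rxn_def)
  then have "RT_pol vol lab_species lab_rxns id lab_rel \<rho> (\<lambda>t. t) (slow_conf k) (slow_rxn k)
      = (\<Sum>i\<le>k. TC vol lab_rxns (\<rho> (slow_conf k i)) (slow_conf k i))"
    by (intro RT_pol_eq_sum_if_steps_in_policy halting_step_slow) blast
  also have "\<dots> \<ge> (\<Sum>i\<le>k. ennreal (vol / (2 * real (k - i) + 1)))"
  proof (intro sum_mono)
    fix i assume "i \<in> {..k}"
    then show "ennreal (vol / (2 * real (k - i) + 1)) \<le> TC vol lab_rxns (\<rho> (slow_conf k i)) (slow_conf k i)"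
      using TC_lab_ge[OF \<open>0 < vol\<close> _ LL policy, of "slow_conf k i" i] conf[of i] by simp
  qed
  also have "(\<Sum>i\<le>k. ennreal (vol / (2 * real (k - i) + 1))) = ennreal (\<Sum>i\<le>k. vol / (2 * real (k - i) + 1))"
    using \<open>0 < vol\<close> by (intro sum_ennreal) simp
  also have "(\<Sum>i\<le>k. vol / (2 * real (k - i) + 1)) = vol * (\<Sum>j\<le>k. 1 / (2 * real j + 1))"
    by (subst sum.atLeastAtMost_rev[of _ 0 k, simplified atLeast0AtMost]) (simp add: sum_distrib_left)
  finally show ?thesis .
qed

lemma ln_le_sum_inverse_odd: "ln (real m + 1) / 2 \<le> (\<Sum>j<m. 1 / (2 * real j + 1))"
proof (induction m)
  case (Suc m)
  have "ln (real m + 2) - ln (real m + 1) = ln ((real m + 2) / (real m + 1))"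
    by (simp add: ln_div)
  also have "\<dots> \<le> (real m + 2) / (real m + 1) - 1" by (rule ln_le_minus_one) simp
  also have "\<dots> \<le> 2 / (2 * real m + 1)" by (simp add: field_simps)
  finally show ?case using Suc by (simp add: add.commute)
qed simp

lemma RT_halt_lab_le:
  assumes "0 < \<phi> n"
  shows "RT_halt \<phi> lab_species lab_rxns id lab_rel UNIV n \<le> ennreal (max (\<phi> n) 1)"
  unfolding RT_halt_def
proof (rule INF_lower2)
  show "(\<lambda>_. {rxn_LL}) \<in> {\<rho> \<in> UNIV. runtime_policy lab_species lab_rxns \<rho>}"
    by (simp add: runtime_policy_def NV_lab_rxns)
  show "(SUP (cs, as, \<sigma>)\<in>{(cs, as, \<sigma>). execution lab_species lab_rxns cs as
        \<and> weakly_fair lab_rxns cs as \<and> valid lab_species id lab_rel (cs 0)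
        \<and> norm1 lab_species (cs 0) = n \<and> (\<forall>t. t \<le> \<sigma> t)}.
      RT_pol (\<phi> n) lab_species lab_rxns id lab_rel (\<lambda>_. {rxn_LL}) \<sigma> cs as) \<le> ennreal (max (\<phi> n) 1)"
    using assms by (intro SUP_least) (auto simp: valid_lab_rel_iff intro!: RT_pol_lab_le)
qed

lemma RT_halt_lab_escape_ge:
  assumes "0 < \<phi> n" and "2 \<le> n"
  shows "ennreal (\<phi> n * ln (real n) / 2)
    \<le> RT_halt \<phi> lab_species lab_rxns id lab_rel
         {\<rho>. \<forall>c. is_config lab_species c \<longrightarrow> escape lab_species lab_rxns c \<subseteq> \<rho> c} n"
  unfolding RT_halt_def
proof (rule INF_greatest)
  fix \<rho> assume "\<rho> \<in> {\<rho> \<in> {\<rho>. \<forall>c. is_config lab_species c \<longrightarrow> escape lab_species lab_rxns c \<subseteq> \<rho> c}.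
    runtime_policy lab_species lab_rxns \<rho>}"
  then have escape: "\<forall>c. is_config lab_species c \<longrightarrow> escape lab_species lab_rxns c \<subseteq> \<rho> c"
    and policy: "runtime_policy lab_species lab_rxns \<rho>" by auto
  define k where "k = n - 2"
  have "\<phi> n * ln (real n) / 2 \<le> \<phi> n * (\<Sum>j\<le>k. 1 / (2 * real j + 1))"
    using ln_le_sum_inverse_odd[of "Suc k"] assms
    by (simp add: k_def lessThan_Suc_atMost of_nat_diff add.commute)
  then have "ennreal (\<phi> n * ln (real n) / 2)
      \<le> RT_pol (\<phi> n) lab_species lab_rxns id lab_rel \<rho> (\<lambda>t. t) (slow_conf k) (slow_rxn k)"
    using RT_pol_slow_ge[OF assms(1) escape policy, of k] by (meson ennreal_leI order.trans)
  moreover have "(slow_conf k, slow_rxn k, \<lambda>t::nat. t) \<in> {(cs, as, \<sigma>). execution lab_species lab_rxns cs as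
      \<and> weakly_fair lab_rxns cs as \<and> valid lab_species id lab_rel (cs 0)
      \<and> norm1 lab_species (cs 0) = n \<and> (\<forall>t. t \<le> \<sigma> t)}"
    using execution_slow weakly_fair_slow valid_slow_conf_0[of k] assms(2) by (simp add: k_def)
  ultimately show "ennreal (\<phi> n * ln (real n) / 2) \<le> (SUP (cs, as, \<sigma>)\<in>{(cs, as, \<sigma>).
      execution lab_species lab_rxns cs as \<and> weakly_fair lab_rxns cs as
      \<and> valid lab_species id lab_rel (cs 0) \<and> norm1 lab_species (cs 0) = n \<and> (\<forall>t. t \<le> \<sigma> t)}.
        RT_pol (\<phi> n) lab_species lab_rxns id lab_rel \<rho> \<sigma> cs as)"
    by (intro SUP_upper2) auto
qed

lemma RT_halt_lab_linear:
  assumes "\<forall>n. 0 < \<phi> n" and "\<phi> \<in> O(\<lambda>n. real n)"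
  shows "\<exists>K. \<exists>N. \<forall>n\<ge>N. RT_halt \<phi> lab_species lab_rxns id lab_rel UNIV n \<le> ennreal (K * real n)"
proof -
  obtain K where "0 < K" and "eventually (\<lambda>n. norm (\<phi> n) \<le> K * norm (real n)) at_top"
    using assms(2) by (elim landau_o.bigE)
  then obtain N where N: "\<And>n. N \<le> n \<Longrightarrow> \<phi> n \<le> K * real n"
    by (auto simp: eventually_at_top_linorder abs_le_iff)
  have "max (\<phi> n) 1 \<le> (K + 1) * real n" if "max N 1 \<le> n" for n
  proof -
    have "1 \<le> real n" "0 \<le> K * real n" using that \<open>0 < K\<close> by auto
    then show ?thesis using N[of n] that by (simp add: distrib_right)
  qed
  then have "RT_halt \<phi> lab_species lab_rxns id lab_rel UNIV n \<le> ennreal ((K + 1) * real n)"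
    if "max N 1 \<le> n" for n
    using RT_halt_lab_le[of \<phi> n] assms(1) that by (meson ennreal_leI order.trans)
  then show ?thesis by blast
qed

lemma RT_halt_lab_escape_nlogn:
  assumes "\<forall>n. 0 < \<phi> n" and "\<phi> \<in> \<Omega>(\<lambda>n. real n)"
  shows "\<exists>K>0. \<exists>N. \<forall>n\<ge>N. ennreal (K * real n * ln (real n))
    \<le> RT_halt \<phi> lab_species lab_rxns id lab_rel
         {\<rho>. \<forall>c. is_config lab_species c \<longrightarrow> escape lab_species lab_rxns c \<subseteq> \<rho> c} n"
proof -
  obtain K where "0 < K" and "eventually (\<lambda>n. norm (\<phi> n) \<ge> K * norm (real n)) at_top"
    using assms(2) by (elim landau_omega.bigE)
  then obtain N where N: "\<And>n. N \<le> n \<Longrightarrow> K * real n \<le> \<phi> n"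
    using assms(1) by (auto simp: eventually_at_top_linorder less_imp_le)
  have "K / 2 * real n * ln (real n) \<le> \<phi> n * ln (real n) / 2" if "max N 2 \<le> n" for n
    using mult_right_mono[OF N[of n], of "ln (real n)"] that by simp
  then have "ennreal (K / 2 * real n * ln (real n))
      \<le> RT_halt \<phi> lab_species lab_rxns id lab_rel
         {\<rho>. \<forall>c. is_config lab_species c \<longrightarrow> escape lab_species lab_rxns c \<subseteq> \<rho> c} n"
    if "max N 2 \<le> n" for n
    using RT_halt_lab_escape_ge[of \<phi> n] assms(1) that by (meson ennreal_leI order.trans max.boundedE)
  moreover have "0 < K / 2" using \<open>0 < K\<close> by simp
  ultimately show ?thesis by blast
qed

theorem proposition7p4:
  shows "\<exists>S R U \<mu> C. crn S R \<and> interface S U \<mu> C \<and> finite_density S R \<mu> C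
     \<and> halting_correct S R \<mu> C
     \<and> (\<forall>\<phi>::nat \<Rightarrow> real. (\<forall>n. 0 < \<phi> n) \<and> \<phi> \<in> \<Theta>(\<lambda>n. real n) \<longrightarrow>
          (\<exists>K::real. \<exists>N. \<forall>n\<ge>N. RT_halt \<phi> S R \<mu> C UNIV n \<le> ennreal (K * real n))
        \<and> (\<exists>K::real>0. \<exists>N. \<forall>n\<ge>N.
             ennreal (K * real n * ln (real n))
               \<le> RT_halt \<phi> S R \<mu> C {\<rho>. \<forall>c. is_config S c \<longrightarrow> escape S R c \<subseteq> \<rho> c} n))"
  using crn_lab interface_lab finite_density_lab halting_correct_lab
    RT_halt_lab_linear RT_halt_lab_escape_nlogn bigthetaD1 bigthetaD2 by blast

end
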